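(* Fix $I_{ij},I_{jk},I_{ki}\in[0,\infty)$. Consider the set $$\mathcal{R}_E^{ijk}=\{(r_i,r_j,r_k)\in\mathbb{R}^3_{>0}:\ l_{ij},l_{jk},l_{ki}\text{ satisfy the strict triangle inequalities}\},$$ where $$l_{ij}=\sqrt{r_i^2+r_j^2+2I_{ij}r_ir_j},\quad l_{jk}=\sqrt{r_j^2+r_k^2+2I_{jk}r_jr_k},\quad l_{ki}=\sqrt{r_k^2+r_i^2+2I_{ki}r_kr_i}.$$ Then $\mathcal{R}_E^{ijk}$ is a connected and simply connected open subset of $\mathbb{R}^3_{>0}$. *)

theory Defs
  imports "HOL-Analysis.Analysis"
begin

definition edge_len :: "real \<Rightarrow> real \<Rightarrow> real \<Rightarrow> real" where
  "edge_len I a b = sqrt (a\<^sup>2 + b\<^sup>2 + 2 * I * a * b)"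

definition RE :: "real \<Rightarrow> real \<Rightarrow> real \<Rightarrow> (real \<times> real \<times> real) set" where
  "RE Iij Ijk Iki = {(ri, rj, rk). ri > 0 \<and> rj > 0 \<and> rk > 0 \<and>
     (let lij = edge_len Iij ri rj; ljk = edge_len Ijk rj rk; lki = edge_len Iki rk ri
      in lij < ljk + lki \<and> ljk < lij + lki \<and> lki < lij + ljk)}"

end

theory Submission
  imports Defs
begin

(* The set RE a b c of admissible radius triples is homeomorphic to a convex cone.

   Writing L1, L2, L3 for the squared edge lengths, the strict triangle inequalities are
   equivalent (Heron) to positivity of  heron L1 L2 L3 = 2(L1L2 + L2L3 + L3L1) - (L1^2 + L2^2 + L3^2).
   Substituting x = 1/ri etc. this polynomial becomes, up to the positive factor 4(ri rj rk)^2,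
   a quadratic form  cone_form a b c  in (x, y, z).  Hence coordinatewise inversion maps RE
   homeomorphically onto the cone  pos_cone a b c = {x, y, z > 0 and cone_form > 0}.

   The cone is convex: by homogeneity it suffices that it is closed under addition.  If all
   weights are at most 1 the form is positive on the whole open octant.  Otherwise, after a
   cyclic rotation, c > 1, and then (c^2 - 1) cone_form = D * binform c x z - m^2 with D >= 0
   and m linear; positivity means |m| < sqrt D * sqrt (binform c x z), and closure under
   addition follows from the superadditivity of sqrt (binform c) on the quadrant for c >= 1.
   Convex sets are connected and simply connected, and both properties transfer along the
   homeomorphism.  Openness of RE is read off directly from the Heron description. *)

section \<open>Heron's criterion for the strict triangle inequalities\<close>

text \<open>Sixteen times the squared area of a triangle, as a function of the squared side lengths.\<close>
definition heron :: "real \<Rightarrow> real \<Rightarrow> real \<Rightarrow> real" where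
  "heron L1 L2 L3 = 2 * (L1 * L2 + L2 * L3 + L3 * L1) - (L1\<^sup>2 + L2\<^sup>2 + L3\<^sup>2)"

text \<open>If any two of three reals have positive sum, at most one of them is non-positive, so
  their product is positive exactly when all three are.\<close>
lemma prod_pos_iff_all_pos:
  fixes p q r :: real
  assumes "p + q > 0" "q + r > 0" "r + p > 0"
  shows "p * q * r > 0 \<longleftrightarrow> p > 0 \<and> q > 0 \<and> r > 0"
proof
  have first_pos: "u > 0" if "u * v * w > 0" "u + v > 0" "w + u > 0" for u v w :: real
  proof (rule ccontr)
    assume "\<not> u > 0"
    then have "u * (v * w) \<le> 0"
      using that by (intro mult_nonpos_nonneg) auto
    then show False using that(1) by (simp add: mult.assoc)
  qed
  assume "p * q * r > 0"
  then show "p > 0 \<and> q > 0 \<and> r > 0"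
    using first_pos[of p q r] first_pos[of q r p] first_pos[of r p q] assms
    by (simp add: ac_simps)
qed simp

text \<open>Heron's formula factors as
  (l1 + l2 + l3)(l2 + l3 - l1)(l3 + l1 - l2)(l1 + l2 - l3), which gives the criterion.\<close>
lemma strict_triangle_iff_heron_pos:
  fixes l1 l2 l3 :: real
  assumes "l1 > 0" "l2 > 0" "l3 > 0"
  shows "(l1 < l2 + l3 \<and> l2 < l1 + l3 \<and> l3 < l1 + l2) \<longleftrightarrow> heron (l1\<^sup>2) (l2\<^sup>2) (l3\<^sup>2) > 0"
proof -
  have factor: "heron (l1\<^sup>2) (l2\<^sup>2) (l3\<^sup>2)
      = (l1 + l2 + l3) * ((l2 + l3 - l1) * (l3 + l1 - l2) * (l1 + l2 - l3))"
    unfolding heron_def by algebra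
  have "heron (l1\<^sup>2) (l2\<^sup>2) (l3\<^sup>2) > 0 \<longleftrightarrow> (l2 + l3 - l1) * (l3 + l1 - l2) * (l1 + l2 - l3) > 0"
    unfolding factor using assms by (simp add: zero_less_mult_iff)
  also have "\<dots> \<longleftrightarrow> l2 + l3 - l1 > 0 \<and> l3 + l1 - l2 > 0 \<and> l1 + l2 - l3 > 0"
    using assms by (intro prod_pos_iff_all_pos) auto
  finally show ?thesis by linarith
qed

lemma edge_len_pos_sq:
  assumes "I \<ge> 0" "x > 0" "y > 0"
  shows "edge_len I x y > 0" "(edge_len I x y)\<^sup>2 = x\<^sup>2 + y\<^sup>2 + 2 * I * x * y"
proof -
  have "x\<^sup>2 + y\<^sup>2 + 2 * I * x * y > 0" using assms by (simp add: add_pos_nonneg)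
  then show "edge_len I x y > 0" "(edge_len I x y)\<^sup>2 = x\<^sup>2 + y\<^sup>2 + 2 * I * x * y"
    unfolding edge_len_def by simp_all
qed

definition heron_radii :: "real \<Rightarrow> real \<Rightarrow> real \<Rightarrow> real \<Rightarrow> real \<Rightarrow> real \<Rightarrow> real" where
  "heron_radii a b c x y z =
     heron (x\<^sup>2 + y\<^sup>2 + 2 * a * x * y) (y\<^sup>2 + z\<^sup>2 + 2 * b * y * z) (z\<^sup>2 + x\<^sup>2 + 2 * c * z * x)"

lemma RE_iff_heron_pos:
  assumes "a \<ge> 0" "b \<ge> 0" "c \<ge> 0"
  shows "(x, y, z) \<in> RE a b c \<longleftrightarrow> x > 0 \<and> y > 0 \<and> z > 0 \<and> heron_radii a b c x y z > 0"
proof (cases "x > 0 \<and> y > 0 \<and> z > 0")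
  case True
  note l1 = edge_len_pos_sq[OF assms(1), of x y]
    and l2 = edge_len_pos_sq[OF assms(2), of y z]
    and l3 = edge_len_pos_sq[OF assms(3), of z x]
  show ?thesis
    using True strict_triangle_iff_heron_pos[of "edge_len a x y" "edge_len b y z" "edge_len c z x"]
    unfolding RE_def heron_radii_def by (simp add: l1 l2 l3 Let_def)
qed (auto simp: RE_def)

text \<open>RE is cut out by finitely many strict polynomial inequalities, hence open.\<close>
lemma open_RE:
  assumes "a \<ge> 0" "b \<ge> 0" "c \<ge> 0"
  shows "open (RE a b c)"
proof -
  have "RE a b c = {p. 0 < fst p} \<inter> {p. 0 < fst (snd p)} \<inter> {p. 0 < snd (snd p)}
      \<inter> {p. 0 < heron_radii a b c (fst p) (fst (snd p)) (snd (snd p))}"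
    using RE_iff_heron_pos[OF assms] by auto
  then show ?thesis
    by (simp only:) (intro open_Int open_Collect_less continuous_intros,
        auto simp: heron_radii_def heron_def intro!: continuous_intros)
qed

section \<open>The quadratic form obtained by inverting the radii\<close>

text \<open>The quadratic form Q with heron_radii a b c x y z = 4 (x y z)^2 Q(1/x, 1/y, 1/z).\<close>
definition cone_form :: "real \<Rightarrow> real \<Rightarrow> real \<Rightarrow> real \<Rightarrow> real \<Rightarrow> real \<Rightarrow> real" where
  "cone_form a b c x y z = (1 - b\<^sup>2) * x\<^sup>2 + (1 - c\<^sup>2) * y\<^sup>2 + (1 - a\<^sup>2) * z\<^sup>2
      + 2 * (b * c + a) * x * y + 2 * (a * c + b) * y * z + 2 * (c + a * b) * x * z"

lemma heron_radii_inverse: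
  assumes "x \<noteq> 0" "y \<noteq> 0" "z \<noteq> 0"
  shows "heron_radii a b c x y z = 4 * (x * y * z)\<^sup>2 * cone_form a b c (1 / x) (1 / y) (1 / z)"
  using assms unfolding heron_radii_def heron_def cone_form_def
  by (simp add: field_simps power2_eq_square)

lemma cone_form_rotate: "cone_form a b c x y z = cone_form b c a y z x"
  unfolding cone_form_def by (simp add: algebra_simps)

lemma cone_form_scale: "cone_form a b c (t * x) (t * y) (t * z) = t\<^sup>2 * cone_form a b c x y z"
  unfolding cone_form_def by (simp add: algebra_simps power2_eq_square)

text \<open>If all weights lie in [0, 1], every term of the form is non-negative on the open octant,
  and the x z term (if c > 0) or the y^2 term (if c = 0) is strictly positive.\<close>
lemma cone_form_pos_of_le1:
  assumes "0 \<le> a" "a \<le> 1" "0 \<le> b" "b \<le> 1" "0 \<le> c" "c \<le> 1"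
    and "x > 0" "y > 0" "z > 0"
  shows "cone_form a b c x y z > 0"
proof -
  have "(1 - b\<^sup>2) * x\<^sup>2 \<ge> 0" "(1 - c\<^sup>2) * y\<^sup>2 \<ge> 0" "(1 - a\<^sup>2) * z\<^sup>2 \<ge> 0"
    using assms by (simp_all add: power_le_one)
  moreover have "2 * (b * c + a) * x * y \<ge> 0" "2 * (a * c + b) * y * z \<ge> 0"
    "2 * (c + a * b) * x * z \<ge> 0"
    using assms by simp_all
  moreover have "(1 - c\<^sup>2) * y\<^sup>2 > 0 \<or> 2 * (c + a * b) * x * z > 0"
  proof (cases "c = 0")
    case False
    then have "c + a * b > 0" using assms by (simp add: add_pos_nonneg)
    then show ?thesis using assms by simp
  qed (use assms in simp)
  ultimately show ?thesis unfolding cone_form_def by linarith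
qed

definition binform :: "real \<Rightarrow> real \<Rightarrow> real \<Rightarrow> real" where
  "binform c u v = u\<^sup>2 + v\<^sup>2 + 2 * c * u * v"

text \<open>For c >= 1 the square root of the binary form is superadditive on the closed quadrant
  (a reverse Minkowski inequality): the reverse Cauchy-Schwarz inequality holds because
  the discrepancy equals (c^2 - 1)(u1 w2 - u2 w1)^2.\<close>
lemma sqrt_binform_superadditive:
  fixes c u1 u2 w1 w2 :: real
  assumes "c \<ge> 1" "u1 \<ge> 0" "u2 \<ge> 0" "w1 \<ge> 0" "w2 \<ge> 0"
  shows "sqrt (binform c u1 u2) + sqrt (binform c w1 w2) \<le> sqrt (binform c (u1 + w1) (u2 + w2))"
proof -
  define Nu Nw B where "Nu = binform c u1 u2" and "Nw = binform c w1 w2"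
    and "B = u1 * w1 + u2 * w2 + c * (u1 * w2 + u2 * w1)"
  have Nu: "Nu \<ge> 0" and Nw: "Nw \<ge> 0" and B: "B \<ge> 0"
    unfolding Nu_def Nw_def B_def binform_def using assms by simp_all
  have "B\<^sup>2 - Nu * Nw = (c\<^sup>2 - 1) * (u1 * w2 - u2 * w1)\<^sup>2"
    unfolding B_def Nu_def Nw_def binform_def by (simp add: algebra_simps power2_eq_square)
  moreover have "(c\<^sup>2 - 1) * (u1 * w2 - u2 * w1)\<^sup>2 \<ge> 0"
    using assms by (simp add: one_le_power)
  ultimately have "Nu * Nw \<le> B\<^sup>2" by linarith
  then have cs: "sqrt Nu * sqrt Nw \<le> B"
    using B by (metis real_sqrt_abs real_sqrt_le_mono real_sqrt_mult abs_of_nonneg)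
  have "(sqrt Nu + sqrt Nw)\<^sup>2 = Nu + Nw + 2 * (sqrt Nu * sqrt Nw)"
    using Nu Nw by (simp add: power2_sum)
  also have "\<dots> \<le> Nu + Nw + 2 * B" using cs by simp
  also have "\<dots> = binform c (u1 + w1) (u2 + w2)"
    unfolding B_def Nu_def Nw_def binform_def by (simp add: algebra_simps power2_eq_square)
  finally show ?thesis unfolding Nu_def Nw_def by (simp add: real_le_rsqrt)
qed

text \<open>The linear form m such that (c^2 - 1) cone_form = D binform - m^2.\<close>
definition cone_linear :: "real \<Rightarrow> real \<Rightarrow> real \<Rightarrow> real \<Rightarrow> real \<Rightarrow> real \<Rightarrow> real" where
  "cone_linear a b c x y z = (c\<^sup>2 - 1) * y - ((b * c + a) * x + (a * c + b) * z)"

text \<open>Completing the square in y; the coefficient D = a^2 + b^2 + c^2 + 2abc - 1 is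
  non-negative as soon as c >= 1 and a, b >= 0.\<close>
lemma cone_form_complete_square:
  "(c\<^sup>2 - 1) * cone_form a b c x y z
     = (a\<^sup>2 + b\<^sup>2 + c\<^sup>2 + 2 * a * b * c - 1) * binform c x z - (cone_linear a b c x y z)\<^sup>2"
  unfolding cone_form_def binform_def cone_linear_def by (simp add: algebra_simps power2_eq_square)

lemma cone_form_pos_iff:
  assumes "c > 1" "a \<ge> 0" "b \<ge> 0"
  shows "cone_form a b c x y z > 0 \<longleftrightarrow>
     \<bar>cone_linear a b c x y z\<bar> < sqrt (a\<^sup>2 + b\<^sup>2 + c\<^sup>2 + 2 * a * b * c - 1) * sqrt (binform c x z)"
proof -
  have "c\<^sup>2 > 1" using assms by (simp add: one_less_power)
  then have "cone_form a b c x y z > 0 \<longleftrightarrow> (c\<^sup>2 - 1) * cone_form a b c x y z > 0"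
    by (simp add: zero_less_mult_iff)
  also have "\<dots> \<longleftrightarrow> sqrt ((cone_linear a b c x y z)\<^sup>2)
      < sqrt ((a\<^sup>2 + b\<^sup>2 + c\<^sup>2 + 2 * a * b * c - 1) * binform c x z)"
    unfolding cone_form_complete_square real_sqrt_less_iff by simp
  finally show ?thesis by (simp only: real_sqrt_mult real_sqrt_abs)
qed

text \<open>Positivity on the octant is closed under addition when c > 1: the linear form is
  additive and the bounding term is superadditive.\<close>
lemma cone_form_add_of_gt1:
  assumes "c > 1" "a \<ge> 0" "b \<ge> 0"
    and "x1 > 0" "x3 > 0" "y1 > 0" "y3 > 0"
    and "cone_form a b c x1 x2 x3 > 0" "cone_form a b c y1 y2 y3 > 0"
  shows "cone_form a b c (x1 + y1) (x2 + y2) (x3 + y3) > 0"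
proof -
  define S where "S = sqrt (a\<^sup>2 + b\<^sup>2 + c\<^sup>2 + 2 * a * b * c - 1)"
  have "c\<^sup>2 \<ge> 1" "a\<^sup>2 \<ge> 0" "b\<^sup>2 \<ge> 0" "2 * a * b * c \<ge> 0"
    using assms by (simp_all add: one_le_power)
  then have "S \<ge> 0" unfolding S_def by (intro real_sqrt_ge_zero) linarith
  have additive: "cone_linear a b c (x1 + y1) (x2 + y2) (x3 + y3)
      = cone_linear a b c x1 x2 x3 + cone_linear a b c y1 y2 y3"
    unfolding cone_linear_def by (simp add: algebra_simps)
  have "\<bar>cone_linear a b c (x1 + y1) (x2 + y2) (x3 + y3)\<bar>
      \<le> \<bar>cone_linear a b c x1 x2 x3\<bar> + \<bar>cone_linear a b c y1 y2 y3\<bar>"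
    unfolding additive by (rule abs_triangle_ineq)
  also have "\<dots> < S * (sqrt (binform c x1 x3) + sqrt (binform c y1 y3))"
    using assms cone_form_pos_iff[of c a b] unfolding S_def distrib_left
    by (intro add_strict_mono) blast+
  also have "\<dots> \<le> S * sqrt (binform c (x1 + y1) (x3 + y3))"
    using \<open>S \<ge> 0\<close> assms by (intro mult_left_mono sqrt_binform_superadditive) auto
  finally show ?thesis
    using cone_form_pos_iff[OF assms(1-3)] unfolding S_def by simp
qed

text \<open>Closure under addition for arbitrary non-negative weights: either all weights are at
  most 1, or one exceeds 1 and is rotated into the third position.\<close>
lemma cone_form_add:
  assumes "a \<ge> 0" "b \<ge> 0" "c \<ge> 0"
    and "x1 > 0" "x2 > 0" "x3 > 0" "y1 > 0" "y2 > 0" "y3 > 0"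
    and "cone_form a b c x1 x2 x3 > 0" "cone_form a b c y1 y2 y3 > 0"
  shows "cone_form a b c (x1 + y1) (x2 + y2) (x3 + y3) > 0"
proof -
  have rot2: "cone_form a b c x y z = cone_form c a b z x y" for x y z
    by (metis cone_form_rotate)
  consider "c > 1" | "a > 1" | "b > 1" | "a \<le> 1" "b \<le> 1" "c \<le> 1" by linarith
  then show ?thesis
  proof cases
    case 1
    then show ?thesis using cone_form_add_of_gt1 assms by blast
  next
    case 2
    then show ?thesis
      using cone_form_add_of_gt1[of a b c x2 x1 y2 y1 x3 y3] assms
      by (simp add: cone_form_rotate[of a b c])
  next
    case 3
    then show ?thesis
      using cone_form_add_of_gt1[of b c a x3 x2 y3 y2 x1 y1] assms by (simp add: rot2)
  next
    case 4
    then show ?thesis using cone_form_pos_of_le1 assms by simp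
  qed
qed

section \<open>The convex cone and the inversion homeomorphism\<close>

text \<open>The image of RE under coordinatewise inversion.\<close>
definition pos_cone :: "real \<Rightarrow> real \<Rightarrow> real \<Rightarrow> (real \<times> real \<times> real) set" where
  "pos_cone a b c = {(x, y, z). x > 0 \<and> y > 0 \<and> z > 0 \<and> cone_form a b c x y z > 0}"

text \<open>A cone closed under addition is convex.\<close>
lemma convex_pos_cone:
  assumes "a \<ge> 0" "b \<ge> 0" "c \<ge> 0"
  shows "convex (pos_cone a b c)"
proof (rule convexI)
  fix p q :: "real \<times> real \<times> real" and u w :: real
  assume p: "p \<in> pos_cone a b c" and q: "q \<in> pos_cone a b c"
    and uw: "0 \<le> u" "0 \<le> w" "u + w = 1"
  obtain x1 x2 x3 y1 y2 y3 where pq: "p = (x1, x2, x3)" "q = (y1, y2, y3)"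
    by (metis prod.exhaust)
  consider "u = 0" | "w = 0" | "u > 0" "w > 0" using uw by linarith
  then show "u *\<^sub>R p + w *\<^sub>R q \<in> pos_cone a b c"
  proof cases
    case 3
    have "cone_form a b c (u * x1) (u * x2) (u * x3) > 0"
      "cone_form a b c (w * y1) (w * y2) (w * y3) > 0"
      using p q 3 unfolding pq pos_cone_def by (simp_all add: cone_form_scale)
    then show ?thesis
      using p q 3 assms unfolding pq pos_cone_def by (auto intro: cone_form_add add_pos_pos)
  qed (use p q uw in simp_all)
qed

definition inv3 :: "real \<times> real \<times> real \<Rightarrow> real \<times> real \<times> real" where
  "inv3 p = (1 / fst p, 1 / fst (snd p), 1 / snd (snd p))"

text \<open>Since 4(xyz)^2 > 0, the Heron condition at p is the cone condition at inv3 p.\<close>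
lemma RE_iff_inv3_pos_cone:
  assumes "a \<ge> 0" "b \<ge> 0" "c \<ge> 0"
  shows "p \<in> RE a b c \<longleftrightarrow> inv3 p \<in> pos_cone a b c"
proof -
  obtain x y z where p: "p = (x, y, z)" by (metis prod.exhaust)
  show ?thesis
    unfolding p RE_iff_heron_pos[OF assms] inv3_def pos_cone_def
    by (auto simp: heron_radii_inverse zero_less_mult_iff)
qed

lemma inv3_inv3: "fst p \<noteq> 0 \<Longrightarrow> fst (snd p) \<noteq> 0 \<Longrightarrow> snd (snd p) \<noteq> 0 \<Longrightarrow> inv3 (inv3 p) = p"
  unfolding inv3_def by simp

lemma homeomorphic_pos_cone_RE:
  assumes "a \<ge> 0" "b \<ge> 0" "c \<ge> 0"
  shows "pos_cone a b c homeomorphic RE a b c"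
proof (rule homeomorphicI[where f = inv3 and g = inv3])
  have nz: "fst p \<noteq> 0 \<and> fst (snd p) \<noteq> 0 \<and> snd (snd p) \<noteq> 0"
    if "p \<in> pos_cone a b c \<union> RE a b c" for p
    using that unfolding pos_cone_def RE_def by auto
  then have inv: "inv3 (inv3 p) = p" if "p \<in> pos_cone a b c \<union> RE a b c" for p
    using that by (simp add: inv3_inv3)
  have to_RE: "inv3 p \<in> RE a b c" if "p \<in> pos_cone a b c" for p
    using that inv[of p] RE_iff_inv3_pos_cone[OF assms, of "inv3 p"] by simp
  have to_cone: "inv3 p \<in> pos_cone a b c" if "p \<in> RE a b c" for p
    using that RE_iff_inv3_pos_cone[OF assms] by simp
  have swap: "inv3 ` X = Y"
    if "\<And>p. p \<in> X \<Longrightarrow> inv3 p \<in> Y" "\<And>p. p \<in> Y \<Longrightarrow> inv3 p \<in> X"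
      "\<And>p. p \<in> Y \<Longrightarrow> inv3 (inv3 p) = p" for X Y
  proof (intro equalityI subsetI)
    fix q assume "q \<in> Y"
    then show "q \<in> inv3 ` X" using that by (metis image_eqI)
  qed (use that in blast)
  show "inv3 ` pos_cone a b c = RE a b c" "inv3 ` RE a b c = pos_cone a b c"
    using to_RE to_cone inv by (intro swap; simp)+
  show "continuous_on (pos_cone a b c) inv3" "continuous_on (RE a b c) inv3"
    unfolding inv3_def using nz by (auto intro!: continuous_intros)
  show "\<And>p. p \<in> pos_cone a b c \<Longrightarrow> inv3 (inv3 p) = p"
    "\<And>p. p \<in> RE a b c \<Longrightarrow> inv3 (inv3 p) = p"
    using inv by simp_all
qed

theorem lemma2p1:
  fixes Iij Ijk Iki :: real
  assumes "Iij \<ge> 0" and "Ijk \<ge> 0" and "Iki \<ge> 0"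
  shows "RE Iij Ijk Iki \<subseteq> {(ri, rj, rk). ri > 0 \<and> rj > 0 \<and> rk > 0}
       \<and> open (RE Iij Ijk Iki)
       \<and> connected (RE Iij Ijk Iki)
       \<and> simply_connected (RE Iij Ijk Iki)"
proof (intro conjI)
  show "RE Iij Ijk Iki \<subseteq> {(ri, rj, rk). ri > 0 \<and> rj > 0 \<and> rk > 0}"
    unfolding RE_def by auto
  show "open (RE Iij Ijk Iki)" using open_RE assms .
  have homeo: "pos_cone Iij Ijk Iki homeomorphic RE Iij Ijk Iki"
    using homeomorphic_pos_cone_RE assms .
  have convex: "convex (pos_cone Iij Ijk Iki)" using convex_pos_cone assms .
  show "connected (RE Iij Ijk Iki)"
    using homeomorphic_connectedness[OF homeo] convex_connected[OF convex] by simp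
  show "simply_connected (RE Iij Ijk Iki)"
    using homeomorphic_simply_connected[OF homeo convex_imp_simply_connected[OF convex]] .
qed

end
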